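(* For every positive integer $n$ with $n\not\equiv -1\pmod 7$, \[u(n,n+3)=\varepsilon(n,n+3)=\left\lfloor\frac{4n+12}{7}\right\rfloor.\] Moreover, for every positive integer $m$, $u(7m-1,7m+2)=4m$.
   Context: All matrices are binary. For a nonempty set $S$ of columns of a binary matrix, let $z$ be the sum over the integers of the columns in $S$. $S$ is called $1$-free if no entry of $z$ equals $1$, and even if all entries of $z$ are even. For a binary $m\times n$ matrix $A$ with $m<n$: $\varepsilon(A)$ is the smallest cardinality of a nonempty even set of columns, and $u(A)$ the smallest cardinality of a nonempty $1$-free set of columns. For $m<n$, $\varepsilon(m,n)$ and $u(m,n)$ are the maxima of $\varepsilon(A)$, resp. $u(A)$, over all binary $m\times n$ matrices. *)

theory Defs
  imports Main
begin

text \<open>A binary m x n matrix is represented by A :: nat => nat => bool, where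
  A i j (i < m, j < n) says that entry (i,j) equals 1; entries outside the
  range are irrelevant.\<close>

definition colsum :: "(nat \<Rightarrow> nat \<Rightarrow> bool) \<Rightarrow> nat set \<Rightarrow> nat \<Rightarrow> nat" where
  "colsum A S i = card {j \<in> S. A i j}"

definition even_set :: "nat \<Rightarrow> nat \<Rightarrow> (nat \<Rightarrow> nat \<Rightarrow> bool) \<Rightarrow> nat set \<Rightarrow> bool" where
  "even_set m n A S \<longleftrightarrow> S \<noteq> {} \<and> S \<subseteq> {..<n} \<and> (\<forall>i<m. even (colsum A S i))"

definition one_free_set :: "nat \<Rightarrow> nat \<Rightarrow> (nat \<Rightarrow> nat \<Rightarrow> bool) \<Rightarrow> nat set \<Rightarrow> bool" where
  "one_free_set m n A S \<longleftrightarrow> S \<noteq> {} \<and> S \<subseteq> {..<n} \<and> (\<forall>i<m. colsum A S i \<noteq> 1)"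

definition eps_mat :: "nat \<Rightarrow> nat \<Rightarrow> (nat \<Rightarrow> nat \<Rightarrow> bool) \<Rightarrow> nat" where
  "eps_mat m n A = (LEAST k. \<exists>S. even_set m n A S \<and> card S = k)"

definition u_mat :: "nat \<Rightarrow> nat \<Rightarrow> (nat \<Rightarrow> nat \<Rightarrow> bool) \<Rightarrow> nat" where
  "u_mat m n A = (LEAST k. \<exists>S. one_free_set m n A S \<and> card S = k)"

definition eps_max :: "nat \<Rightarrow> nat \<Rightarrow> nat" where
  "eps_max m n = Max {eps_mat m n A | A. True}"

definition u_max :: "nat \<Rightarrow> nat \<Rightarrow> nat" where
  "u_max m n = Max {u_mat m n A | A. True}"

end

theory Submission
  imports Defs
begin

text \<open>Over GF(2) the even sets of an \<open>m \<times> n\<close> matrix form its kernel, of dimension at least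
  \<open>n - m = 3\<close>. The seven nonzero vectors spanned by three independent even sets cover every
  column either never or exactly four times, so their sizes add up to at most \<open>4n\<close> and one of
  them has at most \<open>4n/7\<close> elements; for \<open>n \<equiv> 2 (mod 7)\<close> this improves to \<open>4 \<lfloor>n/7\<rfloor>\<close>
  because at least three of the seven have even size. Even sets are 1-free, so \<open>u \<le> \<epsilon>\<close>.
  Conversely, rows pairing column \<open>j\<close> with \<open>j + 7\<close> force a 1-free set to be 7-periodic, and
  four lines of the Fano plane on the first seven columns force a nonempty 1-free pattern to meet
  every prefix \<open>{0..<r}\<close>, \<open>r \<noteq> 2\<close>, in at least \<open>\<lfloor>4r/7\<rfloor>\<close> points. Small \<open>n\<close> are covered by an
  all-ones row and by a triangle of three lines.\<close>

lemma card_sym_diff_add: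
  assumes "finite A" "finite B"
  shows "card (sym_diff A B) + 2 * card (A \<inter> B) = card A + card B"
proof -
  have "card (sym_diff A B) = card ((A \<union> B) - (A \<inter> B))"
    by (rule arg_cong[where f = card]) blast
  also have "\<dots> = card (A \<union> B) - card (A \<inter> B)"
    by (rule card_Diff_subset) (use assms in auto)
  finally have "card (sym_diff A B) = card (A \<union> B) - card (A \<inter> B)" .
  moreover have "card (A \<inter> B) \<le> card (A \<union> B)"
    using assms by (intro card_mono) auto
  ultimately show ?thesis using card_Un_Int[OF assms] by simp
qed

lemma even_card_sym_diff:
  assumes "finite A" "finite B"
  shows "even (card (sym_diff A B)) \<longleftrightarrow> (even (card A) \<longleftrightarrow> even (card B))"
  using card_sym_diff_add[OF assms] by (metis even_add even_mult_iff even_numeral)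

lemma sym_diff_eq_empty_iff: "sym_diff A B = {} \<longleftrightarrow> A = B"
  by blast

lemma even_colsum_sym_diff:
  assumes "finite X" "finite Y"
  shows "even (colsum A (sym_diff X Y) i) \<longleftrightarrow> (even (colsum A X i) \<longleftrightarrow> even (colsum A Y i))"
proof -
  have "{j \<in> sym_diff X Y. A i j} = sym_diff {j \<in> X. A i j} {j \<in> Y. A i j}" by auto
  then show ?thesis unfolding colsum_def using assms by (simp add: even_card_sym_diff)
qed

definition even_sets :: "nat \<Rightarrow> nat \<Rightarrow> (nat \<Rightarrow> nat \<Rightarrow> bool) \<Rightarrow> nat set set" where
  "even_sets m n A = {S. S \<subseteq> {..<n} \<and> (\<forall>i<m. even (colsum A S i))}"

lemma even_set_iff: "even_set m n A S \<longleftrightarrow> S \<in> even_sets m n A \<and> S \<noteq> {}"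
  unfolding even_set_def even_sets_def by auto

lemma sym_diff_in_even_sets:
  assumes "X \<in> even_sets m n A" "Y \<in> even_sets m n A"
  shows "sym_diff X Y \<in> even_sets m n A"
proof -
  have "finite X" "finite Y"
    using assms finite_subset[of _ "{..<n}"] unfolding even_sets_def by auto
  then show ?thesis using assms unfolding even_sets_def by (auto simp: even_colsum_sym_diff)
qed

lemma finite_even_sets: "finite (even_sets m n A)"
  by (rule finite_subset[of _ "Pow {..<n}"]) (auto simp: even_sets_def)

lemma card_even_sets: "2 ^ n \<le> 2 ^ m * card (even_sets m n A)"
proof -
  define odd_rows where "odd_rows S = {i \<in> {..<m}. odd (colsum A S i)}" for S
  define rep where "rep v = (SOME S. S \<subseteq> {..<n} \<and> odd_rows S = v)" for v
  have rep: "rep (odd_rows S) \<subseteq> {..<n} \<and> odd_rows (rep (odd_rows S)) = odd_rows S"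
    if "S \<subseteq> {..<n}" for S
    unfolding rep_def by (rule someI[of _ S]) (use that in auto)
  \<comment> \<open>\<open>S\<close> is recovered from its odd rows and its sum with a fixed set having the same odd rows\<close>
  define g where "g S = (odd_rows S, sym_diff S (rep (odd_rows S)))" for S
  have inj: "inj_on g (Pow {..<n})"
  proof (rule inj_onI)
    fix S S' assume "g S = g S'"
    then have "odd_rows S = odd_rows S'"
      and "sym_diff S (rep (odd_rows S)) = sym_diff S' (rep (odd_rows S))"
      unfolding g_def by auto
    then show "S = S'" by blast
  qed
  have into: "g S \<in> Pow {..<m} \<times> even_sets m n A" if S: "S \<subseteq> {..<n}" for S
  proof -
    let ?R = "rep (odd_rows S)"
    have R: "?R \<subseteq> {..<n}" "odd_rows ?R = odd_rows S" using rep[OF S] by auto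
    have fin: "finite S" "finite ?R" using S R(1) finite_subset by auto
    have "even (colsum A (sym_diff S ?R) i)" if "i < m" for i
      using R(2) that fin unfolding odd_rows_def by (auto simp: even_colsum_sym_diff)
    then show ?thesis using S R(1) unfolding g_def even_sets_def odd_rows_def by auto
  qed
  have "card (Pow {..<n}) \<le> card (Pow {..<m} \<times> even_sets m n A)"
    by (rule card_inj_on_le[OF inj]) (use into in blast, simp add: finite_even_sets)
  then show ?thesis by (simp add: card_Pow card_cartesian_product)
qed

lemma ex_even_set:
  assumes "m < n"
  shows "\<exists>S. even_set m n A S"
proof -
  have "2 ^ m * 2 = (2::nat) ^ Suc m" by simp
  also have "\<dots> \<le> 2 ^ n" using assms by (intro power_increasing) auto
  also have "\<dots> \<le> 2 ^ m * card (even_sets m n A)" by (rule card_even_sets)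
  finally have two: "2 \<le> card (even_sets m n A)" by simp
  have "\<not> even_sets m n A \<subseteq> {{}}"
  proof
    assume "even_sets m n A \<subseteq> {{}}"
    then have "card (even_sets m n A) \<le> card {{} :: nat set}" by (intro card_mono) auto
    with two show False by simp
  qed
  then show ?thesis by (auto simp: even_set_iff)
qed

lemma one_free_set_if_even_set: "even_set m n A S \<Longrightarrow> one_free_set m n A S"
  unfolding even_set_def one_free_set_def by auto

lemma u_mat_le_eps_mat:
  assumes "m < n"
  shows "u_mat m n A \<le> eps_mat m n A"
proof -
  have "\<exists>S. even_set m n A S \<and> card S = eps_mat m n A"
    unfolding eps_mat_def by (rule LeastI_ex) (use ex_even_set[OF assms] in blast)
  then show ?thesis
    unfolding u_mat_def by (blast intro: Least_le one_free_set_if_even_set)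
qed

lemma le_u_mat:
  assumes "m < n" "\<And>S. one_free_set m n A S \<Longrightarrow> d \<le> card S"
  shows "d \<le> u_mat m n A"
  unfolding u_mat_def
proof (rule LeastI2_ex)
  show "\<exists>k S. one_free_set m n A S \<and> card S = k"
    using ex_even_set[OF assms(1)] by (blast intro: one_free_set_if_even_set)
qed (use assms(2) in blast)

lemma Max_eqI_of_bounded_attained:
  fixes f :: "'a \<Rightarrow> nat"
  assumes "\<And>x. f x \<le> d" "d \<le> f x\<^sub>0"
  shows "Max {f x | x. True} = d"
proof (rule Max_eqI)
  show "finite {f x | x. True}"
    by (rule finite_subset[of _ "{..d}"]) (use assms(1) in auto)
qed (use assms antisym in auto)

lemma u_max_eqI: "(\<And>A. u_mat m n A \<le> d) \<Longrightarrow> d \<le> u_mat m n A\<^sub>0 \<Longrightarrow> u_max m n = d"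
  unfolding u_max_def by (rule Max_eqI_of_bounded_attained)

lemma eps_max_eqI: "(\<And>A. eps_mat m n A \<le> d) \<Longrightarrow> d \<le> eps_mat m n A\<^sub>0 \<Longrightarrow> eps_max m n = d"
  unfolding eps_max_def by (rule Max_eqI_of_bounded_attained)

section \<open>Upper bound\<close>

text \<open>The sums of the nonempty subfamilies of \<open>X, Y, Z\<close>, addition being symmetric difference.\<close>
definition span3 :: "'a set \<Rightarrow> 'a set \<Rightarrow> 'a set \<Rightarrow> 'a set list" where
  "span3 X Y Z = [X, Y, sym_diff X Y, Z, sym_diff X Z, sym_diff Y Z, sym_diff (sym_diff X Y) Z]"

lemma length_span3 [simp]: "length (span3 X Y Z) = 7"
  by (simp add: span3_def)

text \<open>A GF(2)-linear functional is nonzero on none or on exactly four of the seven.\<close>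
lemma length_filter_span3_le:
  assumes "finite X" "finite Y" "finite Z"
    and "\<And>A B. finite A \<Longrightarrow> finite B \<Longrightarrow> P (sym_diff A B) \<longleftrightarrow> P A \<noteq> P B"
  shows "length (filter P (span3 X Y Z)) \<le> 4"
proof -
  have "P (sym_diff X Y) \<longleftrightarrow> P X \<noteq> P Y" "P (sym_diff X Z) \<longleftrightarrow> P X \<noteq> P Z"
    "P (sym_diff Y Z) \<longleftrightarrow> P Y \<noteq> P Z" "P (sym_diff (sym_diff X Y) Z) \<longleftrightarrow> (P X \<noteq> P Y) \<noteq> P Z"
    using assms by auto
  then show ?thesis unfolding span3_def by (cases "P X"; cases "P Y"; cases "P Z") auto
qed

lemma card_eq_sum_of_bool:
  fixes S :: "nat set"
  assumes "S \<subseteq> {..<n}"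
  shows "card S = (\<Sum>j<n. of_bool (j \<in> S))"
  using assms sum_of_bool_eq[of "{..<n}" "\<lambda>j. j \<in> S"] by (simp add: Int_absorb1)

lemma sum_list_card_eq_sum_count:
  fixes Ss :: "nat set list"
  assumes "\<forall>S\<in>set Ss. S \<subseteq> {..<n}"
  shows "sum_list (map card Ss) = (\<Sum>j<n. length (filter (\<lambda>S. j \<in> S) Ss))"
  using assms
proof (induction Ss)
  case (Cons S Ss)
  have "card S = (\<Sum>j<n. of_bool (j \<in> S))"
    by (rule card_eq_sum_of_bool) (use Cons.prems in simp)
  moreover have "length (filter (\<lambda>T. j \<in> T) (S # Ss))
      = of_bool (j \<in> S) + length (filter (\<lambda>T. j \<in> T) Ss)" for j
    by simp
  ultimately show ?case using Cons by (simp del: sum_of_bool_eq add: sum.distrib)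
qed simp

lemma ex_mult_length_le_sum_list:
  fixes xs :: "nat list"
  assumes "xs \<noteq> []"
  shows "\<exists>x\<in>set xs. length xs * x \<le> sum_list xs"
proof
  show "Min (set xs) \<in> set xs" using assms by simp
  have "length xs * Min (set xs) = sum_list (map (\<lambda>_. Min (set xs)) xs)"
    by (simp add: sum_list_triv)
  also have "\<dots> \<le> sum_list (map (\<lambda>x. x) xs)"
    by (rule sum_list_mono) simp
  finally show "length xs * Min (set xs) \<le> sum_list xs" by simp
qed

lemma ex_le_four_mult_by_parity:
  fixes xs :: "nat list"
  assumes "length xs = 7" "3 \<le> length (filter even xs)" "sum_list xs \<le> 4 * (7 * q + 2)"
  shows "\<exists>x\<in>set xs. x \<le> 4 * q"
proof (rule ccontr)
  assume large: "\<not> ?thesis"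
  have "4 * q + 1 + of_bool (even x) \<le> x" if "x \<in> set xs" for x
    using large that by (cases "even x") (auto elim!: evenE)
  then have "sum_list (map (\<lambda>x. 4 * q + 1 + of_bool (even x)) xs) \<le> sum_list (map (\<lambda>x. x) xs)"
    by (rule sum_list_mono)
  moreover have "sum_list (map (\<lambda>x. of_bool (even x)) xs) = length (filter even xs)"
    by (induction xs) auto
  ultimately show False using assms by (simp add: sum_list_Suc sum_list_addf sum_list_triv)
qed

lemma ex_even_span3:
  assumes "m + 3 \<le> n"
  obtains X Y Z where "\<forall>S\<in>set (span3 X Y Z). even_set m n A S"
proof -
  define E where "E = even_sets m n A"
  have "2 ^ m * 8 = (2::nat) ^ (m + 3)" by (simp add: power_add)
  also have "\<dots> \<le> 2 ^ n" using assms by (intro power_increasing) auto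
  also have "\<dots> \<le> 2 ^ m * card E" unfolding E_def by (rule card_even_sets)
  finally have eight: "8 \<le> card E" by simp
  have avoid: "\<exists>S\<in>E. S \<notin> set Fs" if "length Fs < 8" for Fs
  proof (rule ccontr)
    assume "\<not> ?thesis"
    then have "card E \<le> card (set Fs)" by (intro card_mono) auto
    with eight that card_length[of Fs] show False by linarith
  qed
  obtain X where X: "X \<in> E" "X \<noteq> {}" using avoid[of "[{}]"] by auto
  obtain Y where Y: "Y \<in> E" "Y \<notin> {{}, X}" using avoid[of "[{}, X]"] by auto
  obtain Z where Z: "Z \<in> E" "Z \<notin> {{}, X, Y, sym_diff X Y}"
    using avoid[of "[{}, X, Y, sym_diff X Y]"] by auto
  have "S \<in> E" if "S \<in> set (span3 X Y Z)" for S
    using that X Y Z sym_diff_in_even_sets unfolding E_def span3_def by auto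
  moreover have "S \<noteq> {}" if "S \<in> set (span3 X Y Z)" for S
    using that X Y Z unfolding span3_def sym_diff_eq_empty_iff by auto
  ultimately show thesis using that unfolding E_def even_set_iff by blast
qed

lemma eps_mat_le_card: "even_set m n A S \<Longrightarrow> eps_mat m n A \<le> card S"
  unfolding eps_mat_def by (rule Least_le) blast

lemma eps_mat_upper_bounds:
  assumes "m + 3 \<le> n"
  shows "eps_mat m n A \<le> 4 * n div 7" and "n = 7 * q + 2 \<Longrightarrow> eps_mat m n A \<le> 4 * q"
proof -
  obtain X Y Z where even: "\<forall>S\<in>set (span3 X Y Z). even_set m n A S"
    using ex_even_span3[OF assms] by blast
  define cs where "cs = map card (span3 X Y Z)"
  have len: "length cs = 7" unfolding cs_def by simp
  have sub: "\<forall>S\<in>set (span3 X Y Z). S \<subseteq> {..<n}"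
    using even unfolding even_set_def by blast
  then have fin: "finite X" "finite Y" "finite Z"
    unfolding span3_def by (auto intro: finite_subset)
  have eps_le: "eps_mat m n A \<le> c" if "c \<in> set cs" for c
    using that even eps_mat_le_card unfolding cs_def by auto
  have "sum_list cs = (\<Sum>j<n. length (filter (\<lambda>S. j \<in> S) (span3 X Y Z)))"
    unfolding cs_def by (rule sum_list_card_eq_sum_count[OF sub])
  also have "\<dots> \<le> (\<Sum>j<n. 4)"
    by (intro sum_mono length_filter_span3_le[OF fin]) auto
  finally have sum: "sum_list cs \<le> 4 * n" by simp
  have "length (filter (\<lambda>S. odd (card S)) (span3 X Y Z)) \<le> 4"
    by (rule length_filter_span3_le[OF fin]) (simp add: even_card_sym_diff)
  then have "3 \<le> length (filter even cs)"
    using sum_length_filter_compl[of even cs] unfolding cs_def by (simp add: comp_def)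
  show "eps_mat m n A \<le> 4 * n div 7"
  proof -
    obtain c where "c \<in> set cs" "7 * c \<le> sum_list cs"
      using ex_mult_length_le_sum_list[of cs] len by (auto simp: length_0_conv[symmetric])
    then have "eps_mat m n A * 7 \<le> 4 * n" using eps_le[of c] sum by linarith
    then show ?thesis by (simp add: less_eq_div_iff_mult_less_eq)
  qed
  show "eps_mat m n A \<le> 4 * q" if n: "n = 7 * q + 2"
  proof -
    obtain c where "c \<in> set cs" "c \<le> 4 * q"
      using ex_le_four_mult_by_parity[OF len \<open>3 \<le> _\<close>] sum n by auto
    then show ?thesis using eps_le[of c] by linarith
  qed
qed

section \<open>Lower bound\<close>

lemma sum_lessThan_mod:
  fixes f :: "nat \<Rightarrow> nat"
  assumes "0 < p"
  shows "(\<Sum>j<n. f (j mod p)) = n div p * (\<Sum>k<p. f k) + (\<Sum>k<n mod p. f k)"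
proof -
  have window: "(\<Sum>j\<in>{a * p..<a * p + r}. f (j mod p)) = (\<Sum>k<r. f k)" if "r \<le> p" for a r
  proof -
    have "(\<Sum>j\<in>{a * p..<a * p + r}. f (j mod p)) = (\<Sum>k\<in>{0..<r}. f ((k + a * p) mod p))"
      using sum.shift_bounds_nat_ivl[of "\<lambda>j. f (j mod p)" 0 "a * p" r] by (simp add: add.commute)
    also have "\<dots> = (\<Sum>k<r. f k)"
      using that by (intro sum.cong) auto
    finally show ?thesis .
  qed
  have "(\<Sum>j<n. f (j mod p)) = (\<Sum>j<n div p * p. f (j mod p)) + (\<Sum>j\<in>{n div p * p..<n}. f (j mod p))"
    by (simp add: atLeast0LessThan[symmetric] sum.atLeastLessThan_concat)
  also have "(\<Sum>j<n div p * p. f (j mod p)) = (\<Sum>a<n div p. \<Sum>j\<in>{a * p..<a * p + p}. f (j mod p))"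
    by (rule sum.nat_group[symmetric])
  also have "\<dots> = n div p * (\<Sum>k<p. f k)"
    by (simp add: window)
  also have "(\<Sum>j\<in>{n div p * p..<n}. f (j mod p)) = (\<Sum>k<n mod p. f k)"
    using window[of "n mod p" "n div p"] assms by simp
  finally show ?thesis .
qed

lemma mem_iff_mod_mem:
  fixes S :: "nat set"
  assumes "0 < p" "\<And>i. i + p < n \<Longrightarrow> i \<in> S \<longleftrightarrow> i + p \<in> S" "j < n"
  shows "j \<in> S \<longleftrightarrow> j mod p \<in> S"
  using assms(3)
proof (induction j rule: less_induct)
  case (less j)
  show ?case
  proof (cases "j < p")
    case False
    then have "j - p \<in> S \<longleftrightarrow> j \<in> S" using assms(2)[of "j - p"] less.prems by simp
    moreover have "j - p \<in> S \<longleftrightarrow> (j - p) mod p \<in> S" using less False assms(1) by simp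
    moreover have "(j - p) mod p = j mod p" using False by (simp add: le_mod_geq)
    ultimately show ?thesis by simp
  qed simp
qed

lemma card_shift_periodic:
  fixes S :: "nat set"
  assumes "0 < p" "S \<subseteq> {..<n}" "\<And>i. i + p < n \<Longrightarrow> i \<in> S \<longleftrightarrow> i + p \<in> S"
  shows "card S = n div p * (\<Sum>k<p. of_bool (k \<in> S)) + (\<Sum>k<n mod p. of_bool (k \<in> S))"
proof -
  have "card S = (\<Sum>j<n. of_bool (j \<in> S))" by (rule card_eq_sum_of_bool[OF assms(2)])
  also have "\<dots> = (\<Sum>j<n. of_bool (j mod p \<in> S))"
    by (intro sum.cong refl) (subst mem_iff_mod_mem[OF assms(1,3)]; simp)
  also have "\<dots> = n div p * (\<Sum>k<p. of_bool (k \<in> S)) + (\<Sum>k<n mod p. of_bool (k \<in> S))"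
    by (rule sum_lessThan_mod[OF assms(1)])
  finally show ?thesis .
qed

definition line_matrix :: "nat set list \<Rightarrow> nat \<Rightarrow> nat \<Rightarrow> bool" where
  "line_matrix Ls i j \<longleftrightarrow> j \<in> Ls ! i"

lemma colsum_line_matrix: "colsum (line_matrix Ls) S i = card (S \<inter> Ls ! i)"
  unfolding colsum_def line_matrix_def by (metis Collect_conj_eq Collect_mem_eq)

lemma card_Int_triple:
  assumes "distinct [a, b, c]"
  shows "card (T \<inter> {a, b, c}) = of_bool (a \<in> T) + of_bool (b \<in> T) + of_bool (c \<in> T)"
  using assms by (cases "a \<in> T"; cases "b \<in> T"; cases "c \<in> T") (auto simp: Int_insert_right)

lemma card_ge_2_if_one_free_all_ones:
  assumes "0 < m" "one_free_set m n (\<lambda>_ _. True) S"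
  shows "2 \<le> card S"
proof -
  have "finite S" "S \<noteq> {}" "card S \<noteq> 1"
    using assms finite_subset[of S "{..<n}"] unfolding one_free_set_def colsum_def by auto
  then show ?thesis by (cases "card S") (auto simp: Suc_le_eq)
qed

definition triangle_lines :: "nat set list" where
  "triangle_lines = [{0, 2, 4}, {1, 2, 5}, {3, 4, 5}]"

lemma card_ge_3_if_one_free_triangle:
  assumes "one_free_set 3 6 (line_matrix triangle_lines) S"
  shows "3 \<le> card S"
proof -
  have sub: "S \<subseteq> {..<6}" and "S \<noteq> {}" and lines: "\<And>i. i < 3 \<Longrightarrow> card (S \<inter> triangle_lines ! i) \<noteq> 1"
    using assms unfolding one_free_set_def colsum_line_matrix by auto
  then obtain j where "j \<in> S" "j < 6" by blast
  moreover from \<open>j < 6\<close> have "j = 0 \<or> j = 1 \<or> j = 2 \<or> j = 3 \<or> j = 4 \<or> j = 5" by linarith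
  ultimately have "0 \<in> S \<or> 1 \<in> S \<or> 2 \<in> S \<or> 3 \<in> S \<or> 4 \<in> S \<or> 5 \<in> S" by blast
  moreover have "of_bool (0 \<in> S) + of_bool (2 \<in> S) + of_bool (4 \<in> S) \<noteq> (1::nat)"
    "of_bool (1 \<in> S) + of_bool (2 \<in> S) + of_bool (5 \<in> S) \<noteq> (1::nat)"
    "of_bool (3 \<in> S) + of_bool (4 \<in> S) + of_bool (5 \<in> S) \<noteq> (1::nat)"
    using lines[of 0] lines[of 1] lines[of 2] by (simp_all add: triangle_lines_def card_Int_triple)
  ultimately have "3 \<le> of_bool (0 \<in> S) + of_bool (1 \<in> S) + of_bool (2 \<in> S) + of_bool (3 \<in> S)
      + of_bool (4 \<in> S) + (of_bool (5 \<in> S) :: nat)"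
    by (cases "0 \<in> S"; cases "1 \<in> S"; cases "2 \<in> S"; cases "3 \<in> S"; cases "4 \<in> S"; cases "5 \<in> S")
      simp_all
  then show ?thesis
    by (simp del: sum_of_bool_eq add: card_eq_sum_of_bool[OF sub] lessThan_nat_numeral)
qed

text \<open>Four of the seven lines of the Fano plane on the points \<open>0..6\<close>.\<close>
definition fano_lines :: "nat set list" where
  "fano_lines = [{0, 1, 4}, {0, 2, 5}, {0, 3, 6}, {1, 2, 6}]"

text \<open>\<open>r = 2\<close> must be excluded because of \<open>T = {2, 3, 5, 6}\<close>; this is the exceptional residue
  \<open>n \<equiv> -1 (mod 7)\<close> of the theorem.\<close>
lemma fano_prefix_bound:
  assumes "\<exists>k<7. k \<in> T" "\<forall>L\<in>set fano_lines. card (T \<inter> L) \<noteq> 1" "r \<le> 7" "r \<noteq> 2"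
  shows "4 * r div 7 \<le> (\<Sum>k<r. of_bool (k \<in> T))"
proof -
  obtain j where "j \<in> T" "j < 7" using assms(1) by blast
  moreover from \<open>j < 7\<close> have "j = 0 \<or> j = 1 \<or> j = 2 \<or> j = 3 \<or> j = 4 \<or> j = 5 \<or> j = 6" by linarith
  ultimately have "0 \<in> T \<or> 1 \<in> T \<or> 2 \<in> T \<or> 3 \<in> T \<or> 4 \<in> T \<or> 5 \<in> T \<or> 6 \<in> T" by blast
  moreover have "of_bool (0 \<in> T) + of_bool (1 \<in> T) + of_bool (4 \<in> T) \<noteq> (1::nat)"
    "of_bool (0 \<in> T) + of_bool (2 \<in> T) + of_bool (5 \<in> T) \<noteq> (1::nat)"
    "of_bool (0 \<in> T) + of_bool (3 \<in> T) + of_bool (6 \<in> T) \<noteq> (1::nat)"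
    "of_bool (1 \<in> T) + of_bool (2 \<in> T) + of_bool (6 \<in> T) \<noteq> (1::nat)"
    using assms(2) by (simp_all add: fano_lines_def card_Int_triple)
  ultimately have bounds: "1 \<le> of_bool (0 \<in> T) + of_bool (1 \<in> T) + (of_bool (2 \<in> T) :: nat)
    \<and> 2 \<le> of_bool (0 \<in> T) + of_bool (1 \<in> T) + of_bool (2 \<in> T) + (of_bool (3 \<in> T) :: nat)
    \<and> 3 \<le> of_bool (0 \<in> T) + of_bool (1 \<in> T) + of_bool (2 \<in> T) + of_bool (3 \<in> T)
        + of_bool (4 \<in> T) + (of_bool (5 \<in> T) :: nat)
    \<and> 4 \<le> of_bool (0 \<in> T) + of_bool (1 \<in> T) + of_bool (2 \<in> T) + of_bool (3 \<in> T)
        + of_bool (4 \<in> T) + of_bool (5 \<in> T) + (of_bool (6 \<in> T) :: nat)"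
    by (cases "0 \<in> T"; cases "1 \<in> T"; cases "2 \<in> T"; cases "3 \<in> T"; cases "4 \<in> T";
        cases "5 \<in> T"; cases "6 \<in> T") simp_all
  have "r = 0 \<or> r = 1 \<or> r = 3 \<or> r = 4 \<or> r = 5 \<or> r = 6 \<or> r = 7"
    using assms(3,4) by linarith
  then show ?thesis
    using bounds by (elim disjE) (simp_all del: sum_of_bool_eq add: lessThan_nat_numeral)
qed

text \<open>The first \<open>n - 7\<close> rows force a 1-free set to be periodic with period 7; the last rows
  are the incidence vectors of the Fano lines on the first seven columns.\<close>
definition extremal_matrix :: "nat \<Rightarrow> nat \<Rightarrow> nat \<Rightarrow> bool" where
  "extremal_matrix n i j \<longleftrightarrow>
     (if i < n - 7 then j = i \<or> j = i + 7 else line_matrix fano_lines (i - (n - 7)) j)"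

lemma extremal_matrix_lower_bounds:
  assumes "7 \<le> n" "one_free_set (n - 3) n (extremal_matrix n) S"
  shows "4 * (n div 7) \<le> card S" and "n mod 7 \<noteq> 2 \<Longrightarrow> 4 * n div 7 \<le> card S"
proof -
  have sub: "S \<subseteq> {..<n}" and "S \<noteq> {}"
    and row: "\<And>i. i < n - 3 \<Longrightarrow> colsum (extremal_matrix n) S i \<noteq> 1"
    using assms(2) unfolding one_free_set_def by auto
  have shift: "i \<in> S \<longleftrightarrow> i + 7 \<in> S" if "i + 7 < n" for i
  proof -
    have "colsum (extremal_matrix n) S i = card (S \<inter> {i, i + 7})"
      using that unfolding colsum_def extremal_matrix_def by (intro arg_cong[where f = card]) auto
    then have "card (S \<inter> {i, i + 7}) \<noteq> 1" using row[of i] that by simp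
    then show ?thesis by (cases "i \<in> S"; cases "i + 7 \<in> S") (auto simp: Int_insert_right)
  qed
  have card: "card S = n div 7 * (\<Sum>k<7. of_bool (k \<in> S)) + (\<Sum>k<n mod 7. of_bool (k \<in> S))"
    by (rule card_shift_periodic[OF _ sub shift]) simp_all
  have lines: "\<forall>L\<in>set fano_lines. card (S \<inter> L) \<noteq> 1"
  proof
    fix L assume "L \<in> set fano_lines"
    moreover have "length fano_lines = 4" by (simp add: fano_lines_def)
    ultimately obtain k where k: "k < 4" "L = fano_lines ! k"
      by (auto simp: in_set_conv_nth)
    have "extremal_matrix n (n - 7 + k) = line_matrix fano_lines k"
      by (simp add: fun_eq_iff extremal_matrix_def)
    then have "colsum (extremal_matrix n) S (n - 7 + k) = card (S \<inter> L)"
      using k(2) unfolding colsum_def line_matrix_def by (metis Collect_conj_eq Collect_mem_eq)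
    then show "card (S \<inter> L) \<noteq> 1" using row[of "n - 7 + k"] k assms(1) by simp
  qed
  obtain j where "j \<in> S" using \<open>S \<noteq> {}\<close> by blast
  then have "j mod 7 \<in> S" using mem_iff_mod_mem[of 7 n S j] shift sub by auto
  then have "\<exists>k<7. k \<in> S" by (intro exI[of _ "j mod 7"]) simp
  note prefix = fano_prefix_bound[OF this lines]
  have periods: "4 * (n div 7) \<le> n div 7 * (\<Sum>k<7. of_bool (k \<in> S))"
    using prefix[of 7] by simp
  then show "4 * (n div 7) \<le> card S" using card by linarith
  show "4 * n div 7 \<le> card S" if "n mod 7 \<noteq> 2"
  proof -
    have "4 * n = 4 * (n mod 7) + 4 * (n div 7) * 7" using div_mult_mod_eq[of n 7] by linarith
    then have "4 * n div 7 = 4 * (n div 7) + 4 * (n mod 7) div 7" by simp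
    then show ?thesis using prefix[of "n mod 7"] that card periods by linarith
  qed
qed

lemma u_mat_extremal_matrix_ge:
  assumes "7 \<le> n"
  shows "4 * (n div 7) \<le> u_mat (n - 3) n (extremal_matrix n)"
    and "n mod 7 \<noteq> 2 \<Longrightarrow> 4 * n div 7 \<le> u_mat (n - 3) n (extremal_matrix n)"
  using assms extremal_matrix_lower_bounds by (auto intro: le_u_mat)

lemma ex_u_mat_ge:
  assumes "0 < n" "(n + 3) mod 7 \<noteq> 2"
  shows "\<exists>A. 4 * (n + 3) div 7 \<le> u_mat n (n + 3) A"
proof -
  consider "n \<le> 2" | "n = 3" | "4 \<le> n" by linarith
  then show ?thesis
  proof cases
    case 1
    then have "4 * (n + 3) div 7 \<le> u_mat n (n + 3) (\<lambda>_ _. True)"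
      using assms(1) by (intro le_u_mat) (auto dest: card_ge_2_if_one_free_all_ones)
    then show ?thesis by blast
  next
    case 2
    then have "4 * (n + 3) div 7 \<le> u_mat n (n + 3) (line_matrix triangle_lines)"
      by (intro le_u_mat) (auto dest: card_ge_3_if_one_free_triangle)
    then show ?thesis by blast
  next
    case 3
    then show ?thesis using u_mat_extremal_matrix_ge(2)[of "n + 3"] assms(2) by auto
  qed
qed

theorem theorem7p1:
  shows "(\<forall>n::nat. 0 < n \<longrightarrow> (n + 1) mod 7 \<noteq> 0 \<longrightarrow>
            u_max n (n + 3) = (4 * n + 12) div 7 \<and> eps_max n (n + 3) = (4 * n + 12) div 7)
       \<and> (\<forall>m::nat. 0 < m \<longrightarrow> u_max (7 * m - 1) (7 * m + 2) = 4 * m)"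
proof (intro conjI allI impI)
  fix n :: nat
  assume n: "0 < n" "(n + 1) mod 7 \<noteq> 0"
  then have "(n + 3) mod 7 \<noteq> 2" by presburger
  then obtain A where A: "4 * (n + 3) div 7 \<le> u_mat n (n + 3) A"
    using ex_u_mat_ge[OF n(1)] by blast
  have eps_le: "eps_mat n (n + 3) B \<le> 4 * (n + 3) div 7" for B
    by (rule eps_mat_upper_bounds(1)) simp
  have u_le: "u_mat n (n + 3) B \<le> 4 * (n + 3) div 7" for B
    using u_mat_le_eps_mat[of n "n + 3" B] eps_le[of B] by simp
  have d: "(4 * n + 12) div 7 = 4 * (n + 3) div 7" by simp
  show "u_max n (n + 3) = (4 * n + 12) div 7"
    unfolding d by (rule u_max_eqI[OF u_le A])
  show "eps_max n (n + 3) = (4 * n + 12) div 7"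
    unfolding d by (rule eps_max_eqI[OF eps_le le_trans[OF A u_mat_le_eps_mat]]) simp
next
  fix m :: nat
  assume "0 < m"
  then have dims: "7 * m - 1 < 7 * m + 2" "7 * m - 1 + 3 \<le> 7 * m + 2" "7 * m + 2 - 3 = 7 * m - 1"
    "7 \<le> 7 * m + 2" "(7 * m + 2) div 7 = m" by auto
  have u_le: "u_mat (7 * m - 1) (7 * m + 2) B \<le> 4 * m" for B
    using u_mat_le_eps_mat[OF dims(1)] eps_mat_upper_bounds(2)[OF dims(2), of m] by (meson le_trans)
  show "u_max (7 * m - 1) (7 * m + 2) = 4 * m"
    by (rule u_max_eqI[OF u_le u_mat_extremal_matrix_ge(1)[OF dims(4), unfolded dims(3,5)]])
qed

end
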